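(* Let $m\ge 2$ and let $M=(\{0,\dots,m-1\},\{a,b,c,d\},\delta_M,0,\{0\})$ be the DFA with $\delta_M(0,a)=m-1$ and $\delta_M(i,a)=i-1$ for $1\le i\le m-1$; $\delta_M(0,b)=1$ and $\delta_M(i,b)=i$ for $1\le i\le m-1$; $\delta_M(0,c)=1$, $\delta_M(1,c)=0$, and $\delta_M(j,c)=j$ for $2\le j\le m-1$; $\delta_M(i,d)=i$ for all $i$. Then the minimal complete DFA accepting $L(M)^R$ has exactly $2^m$ states.
   Context: For a language $L$, $L^R=\{w^R : w\in L\}$ where $w^R$ is the reversal of the word $w$. DFAs are complete deterministic finite automata $(Q,\Sigma,\delta,s,F)$. *)

theory Defs
  imports Main
begin

datatype letter = LA | LB | LC | LD

text \<open>A DFA over an input type 'a (the alphabet is the whole type 'a).\<close>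
record ('s, 'a) dfa =
  states :: "'s set"
  delta  :: "'s \<Rightarrow> 'a \<Rightarrow> 's"
  start  :: 's
  finals :: "'s set"

definition dfa_wf :: "('s, 'a) dfa \<Rightarrow> bool" where
  "dfa_wf A \<longleftrightarrow> finite (states A) \<and> start A \<in> states A \<and> finals A \<subseteq> states A
     \<and> (\<forall>q \<in> states A. \<forall>x. delta A q x \<in> states A)"

definition delta_hat :: "('s, 'a) dfa \<Rightarrow> 's \<Rightarrow> 'a list \<Rightarrow> 's" where
  "delta_hat A q w = foldl (delta A) q w"

definition lang :: "('s, 'a) dfa \<Rightarrow> 'a list set" where
  "lang A = {w. delta_hat A (start A) w \<in> finals A}"

definition rev_lang :: "'a list set \<Rightarrow> 'a list set" where
  "rev_lang L = rev ` L"

definition deltaM :: "nat \<Rightarrow> nat \<Rightarrow> letter \<Rightarrow> nat" where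
  "deltaM m i x = (case x of
      LA \<Rightarrow> (if i = 0 then m - 1 else i - 1)
    | LB \<Rightarrow> (if i = 0 then 1 else i)
    | LC \<Rightarrow> (if i = 0 then 1 else if i = 1 then 0 else i)
    | LD \<Rightarrow> i)"

definition M :: "nat \<Rightarrow> (nat, letter) dfa" where
  "M m = \<lparr> states = {0..<m}, delta = deltaM m, start = 0, finals = {0} \<rparr>"

end

theory Submission
  imports Defs "HOL-Library.Countable_Set"
begin

(* The proof follows Brzozowski's view of reversal.

   For any complete DFA A, the subset automaton rev_dfa A -- states are sets of
   states of A, a letter maps X to its preimage, the start state is the set of
   final states of A and a set is accepting iff it contains the start state of A --
   accepts exactly the reversed language (lang_rev_dfa).  It has 2^|Q| states, and
   transporting it along an injection into nat gives the upper bound.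

   Conversely, if every state of A is reachable, any two distinct reachable states
   of rev_dfa A are separated by a suffix (rev_dfa_separates), so by the
   Myhill-Nerode counting argument every DFA for the reversed language has at least
   as many states as rev_dfa A has reachable states (rev_lang_lower_bound).

   The theorem follows once we check, for the concrete automaton M m, that every
   state of M m is reachable (by powers of a) and that every subset of {0..<m} is
   reachable in rev_dfa (M m) (reach_every_subset, using the letters a, b, c). *)

lemma delta_hat_append [simp]:
  "delta_hat A q (u @ v) = delta_hat A (delta_hat A q u) v"
  by (simp add: delta_hat_def)

lemma delta_hat_Cons [simp]:
  "delta_hat A q (x # w) = delta_hat A (delta A q x) w"
  by (simp add: delta_hat_def)

lemma delta_hat_Nil [simp]: "delta_hat A q [] = q"
  by (simp add: delta_hat_def)

lemma delta_hat_closed: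
  assumes "dfa_wf A" "q \<in> states A"
  shows "delta_hat A q w \<in> states A"
  using assms(2)
  by (induction w arbitrary: q) (use assms(1) in \<open>auto simp: dfa_wf_def\<close>)

definition reachable :: "('s, 'a) dfa \<Rightarrow> 's set" where
  "reachable A = range (delta_hat A (start A))"

lemma reachable_subset_states: "dfa_wf A \<Longrightarrow> reachable A \<subseteq> states A"
  using delta_hat_closed by (fastforce simp: reachable_def dfa_wf_def)

lemma start_reachable: "start A \<in> reachable A"
  by (metis delta_hat_Nil rangeI reachable_def)

lemma reachable_step: "X \<in> reachable A \<Longrightarrow> delta A X x \<in> reachable A"
  by (auto simp: reachable_def) (metis delta_hat_append delta_hat_Cons delta_hat_Nil rangeI)

lemma card_le_states_if_separated:
  assumes wf: "dfa_wf B"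
    and separated: "\<And>i j. i \<in> I \<Longrightarrow> j \<in> I \<Longrightarrow> i \<noteq> j \<Longrightarrow>
                        \<exists>u. (word i @ u \<in> lang B) \<noteq> (word j @ u \<in> lang B)"
  shows "card I \<le> card (states B)"
proof -
  define f where "f i = delta_hat B (start B) (word i)" for i
  have "inj_on f I"
  proof (rule inj_onI, rule ccontr)
    fix i j assume "i \<in> I" "j \<in> I" "f i = f j" "i \<noteq> j"
    then obtain u where "(word i @ u \<in> lang B) \<noteq> (word j @ u \<in> lang B)"
      using separated by blast
    then show False
      using \<open>f i = f j\<close> by (simp add: f_def lang_def)
  qed
  moreover have "f ` I \<subseteq> states B"
    using wf delta_hat_closed[OF wf] by (auto simp: f_def dfa_wf_def)
  ultimately show ?thesis
    using card_inj_on_le wf by (auto simp: dfa_wf_def)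
qed

definition map_dfa :: "('s \<Rightarrow> 't) \<Rightarrow> ('s, 'a) dfa \<Rightarrow> ('t, 'a) dfa" where
  "map_dfa f A = \<lparr> states = f ` states A,
                   delta = (\<lambda>q x. f (delta A (inv_into (states A) f q) x)),
                   start = f (start A), finals = f ` finals A \<rparr>"

lemma map_dfa_run:
  assumes "dfa_wf A" "inj_on f (states A)" "q \<in> states A"
  shows "delta_hat (map_dfa f A) (f q) w = f (delta_hat A q w)"
  using assms(3)
proof (induction w arbitrary: q)
  case (Cons x w)
  have "delta (map_dfa f A) (f q) x = f (delta A q x)"
    using assms(2) Cons.prems by (simp add: map_dfa_def)
  then show ?case
    using Cons assms(1) by (simp add: dfa_wf_def)
qed simp

lemma map_dfa_correct:
  assumes wf: "dfa_wf A" and inj: "inj_on f (states A)"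
  shows "dfa_wf (map_dfa f A)" "lang (map_dfa f A) = lang A"
    and "card (states (map_dfa f A)) = card (states A)"
proof -
  show "dfa_wf (map_dfa f A)"
    using wf by (auto simp: dfa_wf_def map_dfa_def inv_into_into)
  have start: "start A \<in> states A" using wf by (simp add: dfa_wf_def)
  show "lang (map_dfa f A) = lang A"
  proof (rule set_eqI)
    fix w
    have "delta_hat A (start A) w \<in> states A" "finals A \<subseteq> states A"
      using delta_hat_closed[OF wf start] wf by (auto simp: dfa_wf_def)
    then show "w \<in> lang (map_dfa f A) \<longleftrightarrow> w \<in> lang A"
      using map_dfa_run[OF wf inj start, of w] inj_on_image_mem_iff[OF inj]
      by (simp add: lang_def map_dfa_def)
  qed
  show "card (states (map_dfa f A)) = card (states A)"
    using card_image[OF inj] by (simp add: map_dfa_def)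
qed

section \<open>The reversal automaton\<close>

definition rev_dfa :: "('s, 'a) dfa \<Rightarrow> ('s set, 'a) dfa" where
  "rev_dfa A = \<lparr> states = Pow (states A),
                 delta = (\<lambda>X x. {q \<in> states A. delta A q x \<in> X}),
                 start = finals A, finals = {X. X \<subseteq> states A \<and> start A \<in> X} \<rparr>"

lemma rev_dfa_run:
  assumes "dfa_wf A" "X \<subseteq> states A"
  shows "delta_hat (rev_dfa A) X w = {q \<in> states A. delta_hat A q (rev w) \<in> X}"
  using assms(2)
proof (induction w arbitrary: X)
  case (Cons x w)
  have "delta (rev_dfa A) X x \<subseteq> states A"
    by (auto simp: rev_dfa_def)
  then show ?case
    using Cons.IH assms(1) delta_hat_closed[OF assms(1)] by (auto simp: rev_dfa_def dfa_wf_def)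
qed auto

lemma rev_dfa_wf: "dfa_wf A \<Longrightarrow> dfa_wf (rev_dfa A)"
  by (auto simp: dfa_wf_def rev_dfa_def)

lemma card_states_rev_dfa: "dfa_wf A \<Longrightarrow> card (states (rev_dfa A)) = 2 ^ card (states A)"
  by (simp add: dfa_wf_def rev_dfa_def card_Pow)

lemma lang_rev_dfa:
  assumes wf: "dfa_wf A"
  shows "lang (rev_dfa A) = rev_lang (lang A)"
proof (rule set_eqI)
  fix w
  have "finals A \<subseteq> states A" "start A \<in> states A"
    using wf by (auto simp: dfa_wf_def)
  then have "w \<in> lang (rev_dfa A) \<longleftrightarrow> rev w \<in> lang A"
    using rev_dfa_run[OF wf] by (simp add: lang_def rev_dfa_def)
  also have "\<dots> \<longleftrightarrow> w \<in> rev_lang (lang A)"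
    by (metis image_iff rev_lang_def rev_rev_ident)
  finally show "w \<in> lang (rev_dfa A) \<longleftrightarrow> w \<in> rev_lang (lang A)" .
qed

text \<open>A set X of states is accepted after reading rev u in the reversal automaton
  exactly when the state reached by u in A lies in X; so a state of A reachable by u
  separates any two sets that disagree on it.\<close>
lemma rev_dfa_separates:
  assumes "dfa_wf A" "X \<subseteq> states A"
  shows "delta_hat (rev_dfa A) X (rev u) \<in> finals (rev_dfa A)
           \<longleftrightarrow> delta_hat A (start A) u \<in> X"
proof -
  have "finals (rev_dfa A) = {Y. Y \<subseteq> states A \<and> start A \<in> Y}"
    by (simp add: rev_dfa_def)
  then show ?thesis
    using rev_dfa_run[OF assms, of "rev u"] assms(1) by (auto simp: dfa_wf_def)
qed

lemma rev_lang_lower_bound: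
  assumes wfA: "dfa_wf A" and accessible: "states A \<subseteq> reachable A"
    and wfB: "dfa_wf B" and langB: "lang B = rev_lang (lang A)"
  shows "card (reachable (rev_dfa A)) \<le> card (states B)"
proof -
  let ?R = "rev_dfa A"
  define word where "word X = (SOME w. delta_hat ?R (start ?R) w = X)" for X
  have word: "delta_hat ?R (start ?R) (word X) = X" if "X \<in> reachable ?R" for X
    using that unfolding word_def reachable_def by (metis (mono_tags) imageE someI)
  have in_langB: "w \<in> lang B \<longleftrightarrow> delta_hat ?R (start ?R) w \<in> finals ?R" for w
    using langB lang_rev_dfa[OF wfA] unfolding lang_def by blast
  have sub: "reachable ?R \<subseteq> Pow (states A)"
    using reachable_subset_states[OF rev_dfa_wf[OF wfA]] by (simp add: rev_dfa_def)
  show ?thesis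
  proof (rule card_le_states_if_separated[OF wfB])
    fix X Y assume X: "X \<in> reachable ?R" and Y: "Y \<in> reachable ?R" and "X \<noteq> Y"
    then obtain q where q: "q \<in> states A" "q \<in> X \<longleftrightarrow> q \<notin> Y"
      using sub by blast
    then obtain u where u: "delta_hat A (start A) u = q"
      using accessible by (auto simp: reachable_def)
    have "word X @ rev u \<in> lang B \<longleftrightarrow> q \<in> X"
      using in_langB word[OF X] rev_dfa_separates[OF wfA] sub X u by auto
    moreover have "word Y @ rev u \<in> lang B \<longleftrightarrow> q \<in> Y"
      using in_langB word[OF Y] rev_dfa_separates[OF wfA] sub Y u by auto
    ultimately show "\<exists>v. (word X @ v \<in> lang B) \<noteq> (word Y @ v \<in> lang B)"
      using q by blast
  qed
qed

section \<open>The automaton M m\<close>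

lemma dfa_wf_M: "m \<ge> 2 \<Longrightarrow> dfa_wf (M m)"
  unfolding dfa_wf_def M_def by (auto simp: deltaM_def split: letter.split)

lemma card_states_M: "card (states (M m)) = m"
  by (simp add: M_def)

lemma delta_hat_M_LA_power: "k \<le> i \<Longrightarrow> delta_hat (M m) i (replicate k LA) = i - k"
  by (induction k arbitrary: i) (auto simp: M_def deltaM_def)

text \<open>Every state of M m is reached from 0 by a suitable power of a.\<close>
lemma M_accessible: "states (M m) \<subseteq> reachable (M m)"
proof
  fix i assume "i \<in> states (M m)"
  then have i: "i < m" by (simp add: M_def)
  have "delta_hat (M m) (start (M m)) (LA # replicate (m - 1 - i) LA)
          = delta_hat (M m) (m - 1) (replicate (m - 1 - i) LA)"
    by (simp add: M_def deltaM_def)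
  also have "\<dots> = i"
    using i by (simp add: delta_hat_M_LA_power)
  finally show "i \<in> reachable (M m)"
    by (metis rangeI reachable_def)
qed

lemma delta_rev_M: "delta (rev_dfa (M m)) X x = {i. i < m \<and> deltaM m i x \<in> X}"
  by (auto simp: rev_dfa_def M_def)

lemma rev_M_LA: "X \<subseteq> {0..<m-1} \<Longrightarrow> delta (rev_dfa (M m)) X LA = Suc ` X"
  by (auto simp: delta_rev_M deltaM_def image_iff split: if_splits)
    (metis Suc_pred)

lemma rev_M_LB: "delta (rev_dfa (M m)) X LB = {i. i < m \<and> (if i = 0 then 1 \<in> X else i \<in> X)}"
  by (auto simp: delta_rev_M deltaM_def)

lemma rev_M_LC:
  "delta (rev_dfa (M m)) X LC =
     {i. i < m \<and> (if i = 0 then 1 \<in> X else if i = 1 then 0 \<in> X else i \<in> X)}"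
  by (auto simp: delta_rev_M deltaM_def)

lemma reach_shift:
  assumes "Y \<in> reachable (rev_dfa (M m))" "Y \<subseteq> {0..<m-k}"
  shows "(\<lambda>i. i + k) ` Y \<in> reachable (rev_dfa (M m))"
  using assms
proof (induction k arbitrary: Y)
  case (Suc k)
  have "Y \<subseteq> {0..<m-1}"
    using Suc.prems(2) by auto
  then have "Suc ` Y \<in> reachable (rev_dfa (M m))"
    using reachable_step[OF Suc.prems(1), of LA] rev_M_LA by metis
  moreover have "Suc ` Y \<subseteq> {0..<m-k}"
    using Suc.prems(2) by auto
  moreover have "(\<lambda>i. i + k) ` Suc ` Y = (\<lambda>i. i + Suc k) ` Y"
    by (simp add: image_image)
  ultimately show ?case
    using Suc.IH by metis
qed simp

text \<open>Pushing a bit: after a, the letter b adds 0 and keeps 1, while c adds 0 and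
  removes 1; applied to a set containing 0 this shifts it up and puts a new element
  0 on top, with 1 present or absent as desired.\<close>
lemma rev_M_push:
  assumes "0 \<in> X" "X \<subseteq> {0..<m-1}"
  shows "delta (rev_dfa (M m)) (delta (rev_dfa (M m)) X LA) LB = insert 0 (Suc ` X)"
    and "delta (rev_dfa (M m)) (delta (rev_dfa (M m)) X LA) LC = insert 0 (Suc ` (X - {0}))"
  using assms by (auto simp: rev_M_LA rev_M_LB rev_M_LC image_iff)

lemma insert_zero_shift_down: "0 \<in> X \<Longrightarrow> insert 0 (Suc ` {i. Suc i \<in> X}) = X"
  using not0_implies_Suc by fastforce

text \<open>Every set of states containing 0 is reachable, by induction on an upper bound:
  X arises by a push from the set X shifted down by one (with 0 added).\<close>
lemma reach_with_zero:
  "0 \<in> X \<Longrightarrow> X \<subseteq> {0..<Suc n} \<Longrightarrow> n < m \<Longrightarrow> X \<in> reachable (rev_dfa (M m))"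
proof (induction n arbitrary: X)
  case 0
  then have "X = start (rev_dfa (M m))"
    by (auto simp: rev_dfa_def M_def)
  then show ?case
    using start_reachable by metis
next
  case (Suc n)
  define P where "P = insert 0 {i. Suc i \<in> X}"
  have P: "0 \<in> P" "P \<subseteq> {0..<Suc n}"
    using Suc.prems by (auto simp: P_def)
  then have "P \<in> reachable (rev_dfa (M m))" "P \<subseteq> {0..<m-1}"
    using Suc.IH Suc.prems(3) by auto
  have "X = insert 0 (Suc ` P)" if "1 \<in> X"
    using insert_zero_shift_down[OF Suc.prems(1)] that by (auto simp: P_def)
  moreover have "X = insert 0 (Suc ` (P - {0}))" if "1 \<notin> X"
    using insert_zero_shift_down[OF Suc.prems(1)] that by (auto simp: P_def)
  moreover have "delta (rev_dfa (M m)) (delta (rev_dfa (M m)) P LA) x \<in> reachable (rev_dfa (M m))"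
    for x
    using reachable_step \<open>P \<in> reachable (rev_dfa (M m))\<close> by metis
  ultimately show ?case
    using rev_M_push[OF P(1) \<open>P \<subseteq> {0..<m-1}\<close>] by metis
qed

text \<open>Every subset of {0..<m} is a reachable state of the reversal automaton:
  the empty set via b, and a nonempty set by shifting the set obtained from it by
  moving its minimum to 0.\<close>
lemma reach_every_subset:
  assumes m: "m \<ge> 2" and S: "S \<subseteq> {0..<m}"
  shows "S \<in> reachable (rev_dfa (M m))"
proof (cases "S = {}")
  case True
  have "start (rev_dfa (M m)) = {0}"
    by (simp add: rev_dfa_def M_def)
  then have "delta (rev_dfa (M m)) (start (rev_dfa (M m))) LB = {}"
    by (auto simp: rev_M_LB)
  then show ?thesis
    using True reachable_step[OF start_reachable] by metis
next
  case False
  define s where "s = Min S"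
  have s: "s \<in> S" "\<And>j. j \<in> S \<Longrightarrow> s \<le> j"
    using finite_subset[OF S] False by (auto simp: s_def)
  define X where "X = {i. i + s \<in> S}"
  have X: "0 \<in> X" "X \<subseteq> {0..<Suc (m - 1)}"
    using s(1) S m by (auto simp: X_def)
  have "X \<in> reachable (rev_dfa (M m))"
    using reach_with_zero[OF X] m by simp
  moreover have "X \<subseteq> {0..<m-s}"
    using S by (auto simp: X_def)
  moreover have "(\<lambda>i. i + s) ` X = S"
  proof (rule set_eqI)
    fix j
    show "j \<in> (\<lambda>i. i + s) ` X \<longleftrightarrow> j \<in> S"
      using s(2)[of j] by (auto simp: X_def image_iff intro!: exI[of _ "j - s"])
  qed
  ultimately show ?thesis
    using reach_shift by metis
qed

lemma reachable_rev_M: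
  assumes "m \<ge> 2"
  shows "reachable (rev_dfa (M m)) = Pow {0..<m}"
proof
  have "states (rev_dfa (M m)) = Pow {0..<m}"
    by (simp add: rev_dfa_def M_def)
  then show "reachable (rev_dfa (M m)) \<subseteq> Pow {0..<m}"
    using reachable_subset_states[OF rev_dfa_wf[OF dfa_wf_M[OF assms]]] by simp
  show "Pow {0..<m} \<subseteq> reachable (rev_dfa (M m))"
    using reach_every_subset[OF assms] by blast
qed

theorem mainTheorem7:
  fixes m :: nat
  assumes "m \<ge> 2"
  shows "(\<exists>A :: (nat, letter) dfa. dfa_wf A \<and> lang A = rev_lang (lang (M m))
            \<and> card (states A) = 2 ^ m)
       \<and> (\<forall>A :: ('s, letter) dfa. dfa_wf A \<and> lang A = rev_lang (lang (M m))
            \<longrightarrow> 2 ^ m \<le> card (states A))"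
proof
  let ?R = "rev_dfa (M m)"
  have wfM: "dfa_wf (M m)" using assms by (rule dfa_wf_M)
  have wfR: "dfa_wf ?R" using wfM by (rule rev_dfa_wf)
  let ?f = "to_nat_on (states ?R)"
  have "inj_on ?f (states ?R)"
    using wfR by (intro inj_on_to_nat_on countable_finite) (simp add: dfa_wf_def)
  then have "dfa_wf (map_dfa ?f ?R)" "lang (map_dfa ?f ?R) = rev_lang (lang (M m))"
    "card (states (map_dfa ?f ?R)) = 2 ^ m"
    using map_dfa_correct[OF wfR] lang_rev_dfa[OF wfM] card_states_rev_dfa[OF wfM]
    by (simp_all add: card_states_M)
  then show "\<exists>A :: (nat, letter) dfa. dfa_wf A \<and> lang A = rev_lang (lang (M m))
               \<and> card (states A) = 2 ^ m"
    by blast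
  show "\<forall>A :: ('s, letter) dfa. dfa_wf A \<and> lang A = rev_lang (lang (M m))
          \<longrightarrow> 2 ^ m \<le> card (states A)"
  proof (intro allI impI)
    fix B :: "('s, letter) dfa"
    assume "dfa_wf B \<and> lang B = rev_lang (lang (M m))"
    then have "card (reachable ?R) \<le> card (states B)"
      using rev_lang_lower_bound[OF wfM M_accessible] by blast
    then show "2 ^ m \<le> card (states B)"
      using reachable_rev_M[OF assms] by (simp add: card_Pow)
  qed
qed

end
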